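(* Let $p\in\{1,2,\dots\}\cup\{\infty\}$ and let $\mathbf{\Delta}:\ell^n\to\ell^n$ be strictly causal. Assume that for some $\rho>0$ and $0\le\gamma<1$, $\|\mathbf{\Delta}(\mathbf{x})\|_p\le\gamma\|\mathbf{x}\|_p$ for all $\mathbf{x}\in\ell^n$ with $\|\mathbf{x}\|_p<\rho$. Then $(\mathbf{I}-\mathbf{\Delta})^{-1}$ is continuous at $\mathbf{w}=0$ as a map $\ell^n_p\to\ell^n_p$: for every $\varepsilon>0$ there exists $\delta>0$ such that $\|\mathbf{w}\|_p<\delta$ implies $\|(\mathbf{I}-\mathbf{\Delta})^{-1}(\mathbf{w})\|_p<\varepsilon$ (in fact one can take $\delta=(1-\gamma)\min\{\rho,\varepsilon\}$).
   Context: $\ell^n$ is the space of sequences in $\mathbb{R}^n$; $|\cdot|$ a fixed norm on $\mathbb{R}^n$; $\|\cdot\|_p$ the usual $\ell_p$ norm of sequences built from $|\cdot|$ (sup for $p=\infty$), $\ell^n_p=\{\mathbf{x}:\|\mathbf{x}\|_p<\infty\}$. $\mathbf{\Delta}$ strictly causal means $(\mathbf{\Delta}(\mathbf{x}))_t=\Delta_t(x_{t-1},\dots,x_0)$; then $(\mathbf{I}-\mathbf{\Delta})^{-1}(\mathbf{w})$ is the unique $\mathbf{y}$ with $\mathbf{y}=\mathbf{\Delta}(\mathbf{y})+\mathbf{w}$. *)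

theory Defs
  imports "HOL-Analysis.Analysis"
begin

definition is_norm :: "(real^'n \<Rightarrow> real) \<Rightarrow> bool" where
  "is_norm N \<longleftrightarrow> (\<forall>x. N x \<ge> 0) \<and> (\<forall>x. N x = 0 \<longleftrightarrow> x = 0)
     \<and> (\<forall>x y. N (x + y) \<le> N x + N y) \<and> (\<forall>c x. N (c *\<^sub>R x) = \<bar>c\<bar> * N x)"

definition lp_norm :: "(real^'n \<Rightarrow> real) \<Rightarrow> enat \<Rightarrow> (nat \<Rightarrow> real^'n) \<Rightarrow> ennreal" where
  "lp_norm N p x = (case p of
      enat k \<Rightarrow> (if summable (\<lambda>t. N (x t) ^ k)
                 then ennreal (root k (\<Sum>t. N (x t) ^ k)) else \<infinity>)
    | \<infinity> \<Rightarrow> (SUP t. ennreal (N (x t))))"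

definition strictly_causal :: "((nat \<Rightarrow> 'a) \<Rightarrow> (nat \<Rightarrow> 'a)) \<Rightarrow> bool" where
  "strictly_causal D \<longleftrightarrow> (\<forall>x y t. (\<forall>s<t. x s = y s) \<longrightarrow> D x t = D y t)"

definition inv_I_minus :: "((nat \<Rightarrow> 'a::ab_group_add) \<Rightarrow> (nat \<Rightarrow> 'a)) \<Rightarrow> (nat \<Rightarrow> 'a) \<Rightarrow> (nat \<Rightarrow> 'a)" where
  "inv_I_minus D w = (THE y. y = (\<lambda>t. D y t + w t))"

end

theory Submission
  imports Defs
begin

text \<open>
  By strict causality the equation y = D y + w is solved uniquely by recursion in time, and the
  truncation of y to times < T + 1 coincides with that of D (y truncated to times < T) + w.
  Hence, with c = |w|_p / (1 - gamma) < rho, induction on T gives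
  |y_{T+1}|_p <= gamma |y_T|_p + |w|_p <= gamma c + |w|_p = c for the truncations y_T, and
  since an l_p norm is the supremum of the norms of the truncations, |y|_p <= c.
  The one analytic ingredient is Minkowski's inequality for l_p, obtained from convexity of x^k.
\<close>

definition truncation :: "nat \<Rightarrow> (nat \<Rightarrow> 'a::zero) \<Rightarrow> nat \<Rightarrow> 'a" where
  "truncation T x t = (if t < T then x t else 0)"

text \<open>The argument of D is the truncation of the solution to times < t, spelled out so that
  the recursive calls are visibly at earlier times.\<close>
function causal_solution :: "((nat \<Rightarrow> 'a::ab_group_add) \<Rightarrow> nat \<Rightarrow> 'a) \<Rightarrow> (nat \<Rightarrow> 'a) \<Rightarrow> nat \<Rightarrow> 'a" where
  "causal_solution D w t = D (\<lambda>s. if s < t then causal_solution D w s else 0) t + w t"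
  by auto
termination by (relation "Wellfounded.measure (\<lambda>(_, _, t). t)") auto

lemma strictly_causalD:
  assumes "strictly_causal D" "\<And>s. s < t \<Longrightarrow> x s = y s"
  shows "D x t = D y t"
  using assms unfolding strictly_causal_def by blast

lemma causal_solution_eq:
  assumes "strictly_causal D"
  shows "causal_solution D w = (\<lambda>t. D (causal_solution D w) t + w t)"
proof
  fix t
  have "D (\<lambda>s. if s < t then causal_solution D w s else 0) t = D (causal_solution D w) t"
    by (rule strictly_causalD[OF assms]) simp
  then show "causal_solution D w t = D (causal_solution D w) t + w t" by simp
qed

lemma strictly_causal_fixpoint_unique:
  assumes "strictly_causal D" "y = (\<lambda>t. D y t + w t)" "z = (\<lambda>t. D z t + w t)"
  shows "y = z"
proof
  fix t show "y t = z t"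
  proof (induction t rule: less_induct)
    case (less t)
    then have "D y t = D z t" by (intro strictly_causalD[OF assms(1)])
    then show ?case by (subst assms(2), subst assms(3)) simp
  qed
qed

lemma inv_I_minus_eq_causal_solution:
  assumes "strictly_causal D"
  shows "inv_I_minus D w = causal_solution D w"
  unfolding inv_I_minus_def
proof (rule the_equality)
  show "causal_solution D w = (\<lambda>t. D (causal_solution D w) t + w t)"
    by (rule causal_solution_eq[OF assms])
  then show "y = causal_solution D w" if "y = (\<lambda>t. D y t + w t)" for y
    using strictly_causal_fixpoint_unique[OF assms that] by blast
qed

lemma truncation_Suc_causal_fixpoint:
  assumes "strictly_causal D" "y = (\<lambda>t. D y t + w t)"
  shows "truncation (Suc T) y = truncation (Suc T) (\<lambda>t. D (truncation T y) t + w t)"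
proof
  fix t
  have "D y t = D (truncation T y) t" if "t \<le> T"
    using that by (intro strictly_causalD[OF assms(1)]) (simp add: truncation_def)
  then show "truncation (Suc T) y t = truncation (Suc T) (\<lambda>t. D (truncation T y) t + w t) t"
    using fun_cong[OF assms(2), of t] by (simp add: truncation_def)
qed

lemma power_add_le_convex_combination:
  fixes a b A B :: real
  assumes "0 \<le> a" "0 \<le> b" "0 < A" "0 < B" "1 \<le> k"
  shows "(a + b)^k \<le> (A + B)^(k - 1) * (A * (a / A)^k + B * (b / B)^k)"
proof -
  have convex: "convex_on {0::real..} (\<lambda>x. x^k)"
    by (cases "even k") (auto intro: convex_on_subset convex_power_even convex_power_odd)
  define t where "t = B / (A + B)"
  have t: "0 \<le> t" "t \<le> 1" "1 - t = A / (A + B)"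
    using assms by (auto simp: t_def field_simps)
  have "(1 - t) * (a / A) + t * (b / B) = A / (A + B) * (a / A) + B / (A + B) * (b / B)"
    unfolding t(3) by (simp add: t_def)
  also have "\<dots> = (a + b) / (A + B)"
    using assms by (simp add: add_divide_distrib)
  finally have "((a + b) / (A + B))^k \<le> (1 - t) * (a / A)^k + t * (b / B)^k"
    using convex_onD[OF convex t(1,2), of "a / A" "b / B"] assms by simp
  then have "((a + b) / (A + B))^k \<le> A / (A + B) * (a / A)^k + B / (A + B) * (b / B)^k"
    unfolding t(3) by (simp add: t_def)
  then have "(a + b)^k \<le> (A + B)^k * (A / (A + B) * (a / A)^k + B / (A + B) * (b / B)^k)"
    using assms by (simp add: mult_left_mono power_divide divide_le_eq mult.commute)
  also have "\<dots> = (A + B)^(k - 1) * ((A + B) * (A / (A + B) * (a / A)^k + B / (A + B) * (b / B)^k))"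
    using assms by (simp flip: power_Suc2)
  also have "(A + B) * (A / (A + B) * (a / A)^k + B / (A + B) * (b / B)^k) = A * (a / A)^k + B * (b / B)^k"
    using assms by (simp add: distrib_left)
  finally show ?thesis .
qed

lemma minkowski_suminf:
  fixes a b :: "nat \<Rightarrow> real"
  assumes "1 \<le> k" "\<And>t. 0 \<le> a t" "\<And>t. 0 \<le> b t" "0 < A" "0 < B"
    and "summable (\<lambda>t. a t^k)" "(\<Sum>t. a t^k) \<le> A^k"
    and "summable (\<lambda>t. b t^k)" "(\<Sum>t. b t^k) \<le> B^k"
  shows "summable (\<lambda>t. (a t + b t)^k) \<and> (\<Sum>t. (a t + b t)^k) \<le> (A + B)^k"
proof -
  define g where "g t = (A + B)^(k - 1) * (A / A^k * a t^k + B / B^k * b t^k)" for t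
  define G where "G = (A + B)^(k - 1) * (A / A^k * (\<Sum>t. a t^k) + B / B^k * (\<Sum>t. b t^k))"
  have g_sums: "g sums G"
    unfolding g_def G_def by (intro sums_mult sums_add summable_sums assms)
  have rescale: "C * (c / C)^k = C / C^k * c^k" for c C :: real
    by (simp add: power_divide)
  have dominated: "(a t + b t)^k \<le> g t" for t
    using power_add_le_convex_combination[OF assms(2,3,4,5,1)] unfolding g_def rescale .
  have "A / A^k * (\<Sum>t. a t^k) \<le> A" "B / B^k * (\<Sum>t. b t^k) \<le> B"
    using mult_left_mono[OF assms(7), of "A / A^k"] mult_left_mono[OF assms(9), of "B / B^k"] assms
    by simp_all
  then have "G \<le> (A + B)^(k - 1) * (A + B)"
    unfolding G_def using assms by (intro mult_left_mono) simp_all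
  also have "\<dots> = (A + B)^k"
    using assms by (simp flip: power_Suc2)
  finally have "G \<le> (A + B)^k" .
  moreover have summable: "summable (\<lambda>t. (a t + b t)^k)"
    by (rule summable_comparison_test'[OF sums_summable[OF g_sums]]) (use dominated assms(2,3) in simp)
  moreover have "(\<Sum>t. (a t + b t)^k) \<le> G"
    using suminf_le[OF dominated summable sums_summable[OF g_sums]] sums_unique[OF g_sums] by simp
  ultimately show ?thesis by simp
qed

lemma is_norm_nonneg: "is_norm N \<Longrightarrow> 0 \<le> N v"
  unfolding is_norm_def by blast

lemma is_norm_zero: "is_norm N \<Longrightarrow> N 0 = 0"
  unfolding is_norm_def by blast

lemma is_norm_triangle: "is_norm N \<Longrightarrow> N (u + v) \<le> N u + N v"
  unfolding is_norm_def by blast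

lemma lp_norm_enat_le_iff:
  assumes "1 \<le> k" "0 \<le> r" "\<And>v. 0 \<le> N v"
  shows "lp_norm N (enat k) x \<le> ennreal r \<longleftrightarrow> summable (\<lambda>t. N (x t)^k) \<and> (\<Sum>t. N (x t)^k) \<le> r^k"
proof (cases "summable (\<lambda>t. N (x t)^k)")
  case True
  have "root k (\<Sum>t. N (x t)^k) \<le> r \<longleftrightarrow> root k (\<Sum>t. N (x t)^k) \<le> root k (r^k)"
    using assms by (simp add: real_root_power_cancel)
  then show ?thesis
    using True assms by (simp add: lp_norm_def suminf_nonneg)
qed (simp add: lp_norm_def top_unique)

lemma lp_norm_infinity_le_iff:
  assumes "0 \<le> r"
  shows "lp_norm N \<infinity> x \<le> ennreal r \<longleftrightarrow> (\<forall>t. N (x t) \<le> r)"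
  using assms by (simp add: lp_norm_def SUP_le_iff)

lemma lp_norm_mono:
  assumes "\<And>v. 0 \<le> N v" "\<And>t. N (x t) \<le> N (y t)"
  shows "lp_norm N p x \<le> lp_norm N p y"
proof (cases p)
  case (enat k)
  show ?thesis
  proof (cases "summable (\<lambda>t. N (y t)^k)")
    case True
    have le: "N (x t)^k \<le> N (y t)^k" for t
      using assms by (simp add: power_mono)
    have "summable (\<lambda>t. N (x t)^k)"
      using True le assms(1) by (intro summable_comparison_test'[OF True]) auto
    moreover have "(\<Sum>t. N (x t)^k) \<le> (\<Sum>t. N (y t)^k)"
      using True le calculation by (intro suminf_le)
    ultimately show ?thesis
      using True enat by (cases "k = 0") (simp_all add: lp_norm_def real_root_le_mono ennreal_leI)
  qed (simp add: lp_norm_def enat)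
qed (simp add: lp_norm_def assms SUP_mono')

lemma lp_norm_add_le_of_pos_bounds:
  assumes "is_norm N" "1 \<le> p" "0 < A" "0 < B"
    and "lp_norm N p x \<le> ennreal A" "lp_norm N p y \<le> ennreal B"
  shows "lp_norm N p (\<lambda>t. x t + y t) \<le> ennreal (A + B)"
proof (cases p)
  case (enat k)
  then have k: "1 \<le> k"
    using assms(2) by (simp add: one_enat_def)
  have nonneg: "\<And>v. 0 \<le> N v"
    using assms(1) by (rule is_norm_nonneg)
  note le_iff = lp_norm_enat_le_iff[where N = N, OF k _ nonneg]
  have x: "summable (\<lambda>t. N (x t)^k)" "(\<Sum>t. N (x t)^k) \<le> A^k"
    using assms(3,5) le_iff[where r = A and x = x] enat by simp_all
  have y: "summable (\<lambda>t. N (y t)^k)" "(\<Sum>t. N (y t)^k) \<le> B^k"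
    using assms(4,6) le_iff[where r = B and x = y] enat by simp_all
  have sum: "summable (\<lambda>t. (N (x t) + N (y t))^k)" "(\<Sum>t. (N (x t) + N (y t))^k) \<le> (A + B)^k"
    using minkowski_suminf[OF k nonneg nonneg assms(3,4) x y] by simp_all
  have dominated: "N (x t + y t)^k \<le> (N (x t) + N (y t))^k" for t
    by (rule power_mono[OF is_norm_triangle[OF assms(1)] nonneg])
  have "summable (\<lambda>t. N (x t + y t)^k)"
    using dominated nonneg by (intro summable_comparison_test'[OF sum(1)]) simp
  moreover have "(\<Sum>t. N (x t + y t)^k) \<le> (A + B)^k"
    using suminf_le[OF dominated calculation sum(1)] sum(2) by linarith
  ultimately show ?thesis
    using le_iff[where r = "A + B"] assms(3,4) enat by simp
next
  case infinity
  have bounds: "N (x t) \<le> A" "N (y t) \<le> B" for t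
    using assms(3-6) infinity by (simp_all add: lp_norm_infinity_le_iff)
  have "N (x t + y t) \<le> A + B" for t
    using is_norm_triangle[OF assms(1), of "x t" "y t"] bounds[of t] by linarith
  then show ?thesis
    unfolding infinity using assms(3,4) by (subst lp_norm_infinity_le_iff) auto
qed

lemma lp_norm_triangle:
  assumes "is_norm N" "1 \<le> p"
  shows "lp_norm N p (\<lambda>t. x t + y t) \<le> lp_norm N p x + lp_norm N p y"
proof (cases "lp_norm N p x = top \<or> lp_norm N p y = top")
  case False
  then obtain A B where A: "lp_norm N p x = ennreal A" "0 \<le> A" and B: "lp_norm N p y = ennreal B" "0 \<le> B"
    by (metis ennreal_cases)
  show ?thesis
  proof (rule ennreal_le_epsilon)
    \<comment> \<open>Slack e/2 on each bound keeps the convexity weights positive when a norm vanishes.\<close>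
    fix e :: real assume "0 < e"
    then have "lp_norm N p (\<lambda>t. x t + y t) \<le> ennreal ((A + e / 2) + (B + e / 2))"
      using A B by (intro lp_norm_add_le_of_pos_bounds assms) (simp_all add: ennreal_leI)
    also have "\<dots> = ennreal A + ennreal B + ennreal e"
      using A B \<open>0 < e\<close> by (simp flip: ennreal_plus)
    finally show "lp_norm N p (\<lambda>t. x t + y t) \<le> lp_norm N p x + lp_norm N p y + ennreal e"
      using A B by simp
  qed
qed auto

lemma lp_norm_truncation_le:
  assumes "is_norm N"
  shows "lp_norm N p (truncation T x) \<le> lp_norm N p x"
  using assms by (intro lp_norm_mono) (simp_all add: truncation_def is_norm_nonneg is_norm_zero)

lemma lp_norm_le_of_truncations:
  assumes "is_norm N" "1 \<le> p" "0 \<le> r" "\<And>T. lp_norm N p (truncation T x) \<le> ennreal r"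
  shows "lp_norm N p x \<le> ennreal r"
proof (cases p)
  case (enat k)
  then have k: "1 \<le> k"
    using assms(2) by (simp add: one_enat_def)
  have nonneg: "\<And>v. 0 \<le> N v"
    using assms(1) by (rule is_norm_nonneg)
  note le_iff = lp_norm_enat_le_iff[where N = N, OF k assms(3) nonneg]
  have partial_sums: "(\<Sum>t<T. N (x t)^k) \<le> r^k" for T
  proof -
    have "summable (\<lambda>t. N (truncation T x t)^k)" "(\<Sum>t. N (truncation T x t)^k) \<le> r^k"
      using assms(4)[of T] le_iff enat by simp_all
    moreover have "(\<Sum>t<T. N (x t)^k) = (\<Sum>t<T. N (truncation T x t)^k)"
      by (simp add: truncation_def)
    ultimately show ?thesis
      using sum_le_suminf[of "\<lambda>t. N (truncation T x t)^k" "{..<T}"] nonneg by force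
  qed
  have "summable (\<lambda>t. N (x t)^k)"
    using partial_sums nonneg by (intro summableI_nonneg_bounded) auto
  moreover have "(\<Sum>t. N (x t)^k) \<le> r^k"
    using calculation partial_sums by (rule suminf_le_const)
  ultimately show ?thesis
    using le_iff enat by simp
next
  case infinity
  have "N (x t) \<le> r" for t
  proof -
    have "\<forall>s. N (truncation (Suc t) x s) \<le> r"
      using assms(3) assms(4)[of "Suc t"] infinity by (simp add: lp_norm_infinity_le_iff)
    then show ?thesis
      by (metis lessI truncation_def)
  qed
  then show ?thesis
    using infinity assms(3) by (simp add: lp_norm_infinity_le_iff)
qed

lemma lp_norm_truncation_Suc_causal_fixpoint_le:
  assumes "is_norm N" "1 \<le> p" "strictly_causal D" "y = (\<lambda>t. D y t + w t)"
  shows "lp_norm N p (truncation (Suc T) y) \<le> lp_norm N p (D (truncation T y)) + lp_norm N p w"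
proof -
  have "lp_norm N p (truncation (Suc T) y)
      = lp_norm N p (truncation (Suc T) (\<lambda>t. D (truncation T y) t + w t))"
    by (simp only: truncation_Suc_causal_fixpoint[OF assms(3,4)])
  also have "\<dots> \<le> lp_norm N p (\<lambda>t. D (truncation T y) t + w t)"
    using assms(1) by (rule lp_norm_truncation_le)
  also have "\<dots> \<le> lp_norm N p (D (truncation T y)) + lp_norm N p w"
    by (rule lp_norm_triangle[OF assms(1,2)])
  finally show ?thesis .
qed

lemma lp_norm_inv_I_minus_le:
  assumes "is_norm N" "1 \<le> p" "strictly_causal D"
    and "0 \<le> \<gamma>" "0 \<le> c" "c < \<rho>" "0 \<le> W" "\<gamma> * c + W \<le> c"
    and gain: "\<And>x. lp_norm N p x < ennreal \<rho> \<Longrightarrow> lp_norm N p (D x) \<le> ennreal \<gamma> * lp_norm N p x"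
    and "lp_norm N p w \<le> ennreal W"
  shows "lp_norm N p (inv_I_minus D w) \<le> ennreal c"
proof -
  define y where "y = inv_I_minus D w"
  have y: "y = (\<lambda>t. D y t + w t)"
    unfolding y_def inv_I_minus_eq_causal_solution[OF assms(3)] by (rule causal_solution_eq[OF assms(3)])
  have "ennreal c < ennreal \<rho>"
    using assms(5,6) by (simp add: ennreal_lessI)
  have truncations: "lp_norm N p (truncation T y) \<le> ennreal c" for T
  proof (induction T)
    case 0
    have "truncation 0 y = truncation 0 w"
      by (simp add: truncation_def fun_eq_iff)
    then have "lp_norm N p (truncation 0 y) = lp_norm N p (truncation 0 w)"
      by simp
    also have "\<dots> \<le> lp_norm N p w"
      using assms(1) by (rule lp_norm_truncation_le)
    also have "\<dots> \<le> ennreal W"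
      by (rule assms(10))
    also have "\<dots> \<le> ennreal c"
      using mult_nonneg_nonneg[OF assms(4,5)] assms(8) by (intro ennreal_leI) linarith
    finally show ?case .
  next
    case (Suc T)
    from Suc.IH \<open>ennreal c < ennreal \<rho>\<close> have "lp_norm N p (truncation T y) < ennreal \<rho>"
      by (rule order.strict_trans1)
    then have "lp_norm N p (D (truncation T y)) \<le> ennreal \<gamma> * lp_norm N p (truncation T y)"
      by (rule gain)
    also have "\<dots> \<le> ennreal \<gamma> * ennreal c"
      using Suc.IH by (rule mult_left_mono) simp
    also have "\<dots> = ennreal (\<gamma> * c)"
      using assms(4,5) by (simp add: ennreal_mult)
    finally have D_bound: "lp_norm N p (D (truncation T y)) \<le> ennreal (\<gamma> * c)" .
    have "lp_norm N p (truncation (Suc T) y) \<le> lp_norm N p (D (truncation T y)) + lp_norm N p w"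
      by (rule lp_norm_truncation_Suc_causal_fixpoint_le[OF assms(1-3) y])
    also have "\<dots> \<le> ennreal (\<gamma> * c) + ennreal W"
      using D_bound assms(10) by (rule add_mono)
    also have "\<dots> = ennreal (\<gamma> * c + W)"
      using mult_nonneg_nonneg[OF assms(4,5)] assms(7) by (rule ennreal_plus[symmetric])
    also have "\<dots> \<le> ennreal c"
      using assms(8) by (rule ennreal_leI)
    finally show ?case .
  qed
  show ?thesis
    unfolding y_def[symmetric] by (rule lp_norm_le_of_truncations[OF assms(1,2,5) truncations])
qed

lemma lp_norm_inv_I_minus_less:
  assumes "is_norm N" "1 \<le> p" "strictly_causal D" "0 < \<rho>" "0 \<le> \<gamma>" "\<gamma> < 1"
    and gain: "\<And>x. lp_norm N p x < ennreal \<rho> \<Longrightarrow> lp_norm N p (D x) \<le> ennreal \<gamma> * lp_norm N p x"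
    and "0 < \<epsilon>"
    and w: "lp_norm N p w < ennreal ((1 - \<gamma>) * min \<rho> \<epsilon>)"
  shows "lp_norm N p (inv_I_minus D w) < ennreal \<epsilon>"
proof -
  obtain W where W: "lp_norm N p w = ennreal W" "0 \<le> W"
    using w by (metis ennreal_cases ennreal_less_top order.strict_trans less_irrefl)
  define c where "c = W / (1 - \<gamma>)"
  have "W < (1 - \<gamma>) * min \<rho> \<epsilon>"
    using w W assms(4,6,8) by (simp add: ennreal_less_iff)
  moreover have "(1 - \<gamma>) * min \<rho> \<epsilon> \<le> (1 - \<gamma>) * \<rho>" "(1 - \<gamma>) * min \<rho> \<epsilon> \<le> (1 - \<gamma>) * \<epsilon>"
    using assms(6) by (simp_all add: mult_left_mono)
  ultimately have c: "0 \<le> c" "c < \<rho>" "c < \<epsilon>" "\<gamma> * c + W \<le> c"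
    using W(2) assms(6) by (auto simp: c_def field_simps)
  have "lp_norm N p (inv_I_minus D w) \<le> ennreal c"
    using assms(1-3,5) c gain W by (intro lp_norm_inv_I_minus_le[where \<rho> = \<rho> and W = W]) simp_all
  also have "\<dots> < ennreal \<epsilon>"
    using c by (simp add: ennreal_lessI)
  finally show ?thesis .
qed

theorem mainTheorem7:
  fixes N :: "real^'n \<Rightarrow> real" and p :: enat
    and D :: "(nat \<Rightarrow> real^'n) \<Rightarrow> (nat \<Rightarrow> real^'n)"
    and \<rho> \<gamma> :: real
  assumes "is_norm N" and "p \<ge> 1"
    and "strictly_causal D"
    and "\<rho> > 0" and "0 \<le> \<gamma>" and "\<gamma> < 1"
    and "\<And>x. lp_norm N p x < ennreal \<rho> \<Longrightarrow> lp_norm N p (D x) \<le> ennreal \<gamma> * lp_norm N p x"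
  shows "(\<forall>\<epsilon>>0. \<exists>\<delta>>0. \<forall>w. lp_norm N p w < ennreal \<delta>
             \<longrightarrow> lp_norm N p (inv_I_minus D w) < ennreal \<epsilon>)
       \<and> (\<forall>\<epsilon>>0. \<forall>w. lp_norm N p w < ennreal ((1 - \<gamma>) * min \<rho> \<epsilon>)
             \<longrightarrow> lp_norm N p (inv_I_minus D w) < ennreal \<epsilon>)"
proof -
  have small_gain: "lp_norm N p (inv_I_minus D w) < ennreal \<epsilon>"
    if "0 < \<epsilon>" "lp_norm N p w < ennreal ((1 - \<gamma>) * min \<rho> \<epsilon>)" for \<epsilon> w
    using assms that by (rule lp_norm_inv_I_minus_less)
  moreover have "0 < (1 - \<gamma>) * min \<rho> \<epsilon>" if "0 < \<epsilon>" for \<epsilon>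
    using assms(4,6) that by simp
  ultimately show ?thesis
    by blast
qed

end
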